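(* Let $\kappa$ be a regular infinite cardinal and $\mu$ a singular cardinal with $\mathrm{cf}(\mu)=\kappa$. The spaces $({}^{\mu}2,\mu)$ and $({}^{\mu}\kappa,\mu)$ are homeomorphic.
   Context: For ordinals $\delta,\rho$, ${}^{\delta}\rho$ is the set of functions $\delta\to\rho$; for a partial function $s\colon\delta\rightharpoonup\rho$, $[s]=\{f\in{}^{\delta}\rho: s\subseteq f\}$. The ${<}\mu$-box topology on ${}^{\delta}\rho$ has base $\{[s]: |\mathrm{dom}(s)|<\mu\}$; $(X,\mu)$ denotes $X$ with this topology. *)

theory Defs
  imports "HOL-Analysis.Analysis"
begin

text \<open>Cardinals are represented as cardinal orders (well-orders) in the style of
  HOL's BNF cardinal library: the cardinal of a set A is card_of A.\<close>

definition cofinal_in :: "'a rel \<Rightarrow> 'a set \<Rightarrow> bool" where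
  "cofinal_in r X \<longleftrightarrow> X \<subseteq> Field r \<and> (\<forall>a\<in>Field r. \<exists>b\<in>X. (a, b) \<in> r)"

definition cof_is :: "'a rel \<Rightarrow> 'b rel \<Rightarrow> bool" where
  "cof_is r s \<longleftrightarrow>
     (\<exists>X. cofinal_in r X \<and> (card_of X, s) \<in> ordIso) \<and>
     (\<forall>X. cofinal_in r X \<longrightarrow> (s, card_of X) \<in> ordLeq)"

definition regular_cardinal :: "'a rel \<Rightarrow> bool" where
  "regular_cardinal r \<longleftrightarrow> Card_order r \<and> infinite (Field r) \<and> cof_is r r"

definition singular_cardinal :: "'a rel \<Rightarrow> bool" where
  "singular_cardinal r \<longleftrightarrow> Card_order r \<and> infinite (Field r) \<and>
     (\<exists>(X::'a set). cofinal_in r X \<and> (card_of X, r) \<in> ordLess)"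

definition cylinder :: "('i \<rightharpoonup> 'v) \<Rightarrow> ('i \<Rightarrow> 'v) set" where
  "cylinder s = {f. \<forall>x\<in>dom s. s x = Some (f x)}"

text \<open>The <mu-box topology on functions 'i => 'v, where mu = |UNIV :: 'i set|.\<close>
definition box_topology :: "('i \<Rightarrow> 'v) topology" where
  "box_topology = topology_generated_by
     {cylinder s | s. (card_of (dom s), card_of (UNIV :: 'i set)) \<in> ordLess}"

end

theory Submission
  imports Defs
begin

text \<open>Only \<kappa> < \<mu> with \<kappa> infinite matters. A bijection \<mu> \<cong> \<mu> \<times> \<kappa> cuts every
  function \<mu> \<rightarrow> V into \<mu> blocks \<kappa> \<rightarrow> V. As \<kappa> \<rightarrow> 2 and \<kappa> \<rightarrow> \<kappa> both have
  cardinality 2 ^ \<kappa>, a bijection between them, applied to every block, is a bijection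
  from \<mu> \<rightarrow> 2 onto \<mu> \<rightarrow> \<kappa>. It is a homeomorphism of the <\<mu>-box topologies: fewer than
  \<mu> coordinates lie in fewer than \<mu> blocks, which together contain fewer than \<mu>
  coordinates because \<kappa> < \<mu>.\<close>

unbundle cardinal_syntax
no_notation elt_set_eq (infix \<open>=o\<close> 50)

lemma cof_ordLess_singular:
  assumes "singular_cardinal r" and "cof_is r s"
  shows "s <o r"
proof -
  obtain X where "cofinal_in r X" and "|X| <o r"
    using assms(1) unfolding singular_cardinal_def by blast
  moreover from \<open>cofinal_in r X\<close> have "s \<le>o |X|"
    using assms(2) unfolding cof_is_def by blast
  ultimately show ?thesis using ordLeq_ordLess_trans by blast
qed

lemma card_of_Times_ordLess:
  assumes "infinite B" and "|A| <o |C|" and "|B| <o |C|"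
  shows "|A \<times> B| <o |C|"
proof (cases "A = {}")
  case True
  then show ?thesis using assms(2) card_of_empty ordLeq_ordLess_trans by fastforce
next
  case False
  consider "|A| \<le>o |B|" | "|B| \<le>o |A|"
    using ordLeq_total[OF card_of_Well_order card_of_Well_order] by blast
  then show ?thesis
  proof cases
    case 1
    then have "|A \<times> B| =o |B|" using card_of_Times_infinite[OF assms(1) False] by blast
    then show ?thesis using assms(3) ordIso_ordLess_trans by blast
  next
    case 2
    then have "infinite A" using assms(1) card_of_ordLeq_finite by blast
    then have "|A \<times> B| =o |A|"
      using card_of_Times_infinite[OF _ infinite_imp_nonempty[OF assms(1)] 2] by blast
    then show ?thesis using assms(2) ordIso_ordLess_trans by blast
  qed
qed

lemma Cinfinite_card_of_UNIV: "infinite (UNIV :: 'a set) \<Longrightarrow> Cinfinite |UNIV :: 'a set|"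
  by (simp add: cinfinite_def card_of_card_order_on Field_card_of)

lemma card_of_UNIV_fun_eq_cexp: "|UNIV :: ('k \<Rightarrow> 'v) set| = |UNIV :: 'v set| ^c |UNIV :: 'k set|"
  by (simp add: cexp_def Func_def Field_card_of)

lemma card_of_UNIV_fun_bool_ordIso:
  assumes "infinite (UNIV :: 'k set)"
    and "ctwo \<le>o |UNIV :: 'v set|" and "|UNIV :: 'v set| \<le>o |UNIV :: 'k set|"
  shows "|UNIV :: ('k \<Rightarrow> bool) set| =o |UNIV :: ('k \<Rightarrow> 'v) set|"
proof -
  let ?\<kappa> = "|UNIV :: 'k set|" and ?V = "|UNIV :: 'v set|"
  have "ctwo ^c ?\<kappa> \<le>o ?V ^c ?\<kappa>"
    using assms(2) card_of_Card_order by (rule cexp_mono1)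
  moreover have "?V \<le>o ctwo ^c ?\<kappa>"
    using assms(3) ordLess_ctwo_cexp[OF card_of_Card_order]
    by (rule ordLeq_ordLess_trans[THEN ordLess_imp_ordLeq])
  then have "?V ^c ?\<kappa> \<le>o (ctwo ^c ?\<kappa>) ^c ?\<kappa>"
    using card_of_Card_order by (rule cexp_mono1)
  moreover have "(ctwo ^c ?\<kappa>) ^c ?\<kappa> =o ctwo ^c ?\<kappa>"
    using Card_order_ctwo Cinfinite_card_of_UNIV[OF assms(1)] Cnotzero_UNIV ordLeq_refl[OF card_of_Card_order]
    by (rule cexp_cprod_ordLeq)
  ultimately have "ctwo ^c ?\<kappa> =o ?V ^c ?\<kappa>"
    using ordIso_iff_ordLeq ordLeq_ordIso_trans by blast
  then show ?thesis by (simp add: card_of_UNIV_fun_eq_cexp ctwo_def)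
qed

lemma dom_Some_comp [simp]: "dom (Some \<circ> f) = UNIV"
  by (simp add: dom_def)

lemma cylinder_restrict_map_Some: "cylinder ((Some \<circ> f) |` D) = {g. \<forall>x\<in>D. g x = f x}"
  by (auto simp: cylinder_def)

lemma topspace_box_topology: "topspace (box_topology :: ('i \<Rightarrow> 'v) topology) = UNIV"
proof -
  have "|dom (Map.empty :: 'i \<rightharpoonup> 'v)| <o |UNIV :: 'i set|"
    using card_of_empty3 not_ordLeq_iff_ordLess[OF card_of_Well_order card_of_Well_order]
    by fastforce
  moreover have "cylinder (Map.empty :: 'i \<rightharpoonup> 'v) = UNIV"
    by (simp add: cylinder_def)
  ultimately show ?thesis
    unfolding box_topology_def topology_generated_by_topspace by blast
qed

lemma openin_box_topologyI:
  assumes "\<And>f. f \<in> U \<Longrightarrow> \<exists>D. |D| <o |UNIV :: 'i set| \<and> {g. \<forall>x\<in>D. g x = f x} \<subseteq> U"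
  shows "openin (box_topology :: ('i \<Rightarrow> 'v) topology) U"
proof -
  let ?C = "{cylinder s | s :: 'i \<rightharpoonup> 'v. |dom s| <o |UNIV :: 'i set| \<and> cylinder s \<subseteq> U}"
  have "U \<subseteq> \<Union>?C"
  proof
    fix f assume "f \<in> U"
    then obtain D where "|D| <o |UNIV :: 'i set|" and "{g. \<forall>x\<in>D. g x = f x} \<subseteq> U"
      using assms by blast
    then have "cylinder ((Some \<circ> f) |` D) \<in> ?C"
      by (auto simp: cylinder_restrict_map_Some intro!: exI[of _ "(Some \<circ> f) |` D"])
    moreover have "f \<in> cylinder ((Some \<circ> f) |` D)"
      by (simp add: cylinder_restrict_map_Some)
    ultimately show "f \<in> \<Union>?C" by blast
  qed
  then have "U = \<Union>?C" by blast
  moreover have "openin box_topology (\<Union>?C)"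
    unfolding box_topology_def by (rule openin_Union) (auto intro: topology_generated_by_Basis)
  ultimately show ?thesis by simp
qed

lemma continuous_map_into_box_topology:
  assumes "\<And>s. |dom s| <o |UNIV :: 'i set| \<Longrightarrow> openin T (f -` cylinder s \<inter> topspace T)"
  shows "continuous_map T (box_topology :: ('i \<Rightarrow> 'v) topology) f"
  unfolding box_topology_def
proof (rule continuous_on_generated_topo)
  show "f ` topspace T \<subseteq> \<Union> {cylinder s | s :: 'i \<rightharpoonup> 'v. |dom s| <o |UNIV :: 'i set|}"
    using topspace_box_topology[where 'i = 'i and 'v = 'v]
    unfolding box_topology_def topology_generated_by_topspace by simp
qed (use assms in blast)

text \<open>Through the bijection e, f :: 'i \<Rightarrow> 'a is read as the family of blocks
  \<lambda>b. f (inv e (j, b)) :: 'k \<Rightarrow> 'a indexed by j :: 'i; block_map e d applies d to each block.\<close>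

definition block_map ::
    "('i \<Rightarrow> 'i \<times> 'k) \<Rightarrow> (('k \<Rightarrow> 'a) \<Rightarrow> ('k \<Rightarrow> 'b)) \<Rightarrow> ('i \<Rightarrow> 'a) \<Rightarrow> ('i \<Rightarrow> 'b)" where
  "block_map e d f = (\<lambda>i. d (\<lambda>b. f (inv e (fst (e i), b))) (snd (e i)))"

lemma block_map_comp:
  assumes "bij e"
  shows "block_map e d' (block_map e d f) = block_map e (d' \<circ> d) f"
  using assms by (simp add: block_map_def bij_is_surj surj_f_inv_f)

lemma block_map_id:
  assumes "bij e"
  shows "block_map e id f = f"
  using assms by (simp add: block_map_def bij_is_inj)

lemma block_map_cong:
  assumes "\<And>b. g (inv e (fst (e i), b)) = f (inv e (fst (e i), b))"
  shows "block_map e d g i = block_map e d f i"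
  using assms by (simp add: block_map_def)

lemma continuous_map_block_map:
  fixes e :: "'i \<Rightarrow> 'i \<times> 'k"
  assumes "infinite (UNIV :: 'k set)" and "|UNIV :: 'k set| <o |UNIV :: 'i set|"
  shows "continuous_map (box_topology :: ('i \<Rightarrow> 'a) topology) (box_topology :: ('i \<Rightarrow> 'b) topology)
           (block_map e d)"
proof (rule continuous_map_into_box_topology)
  fix s :: "'i \<rightharpoonup> 'b"
  assume "|dom s| <o |UNIV :: 'i set|"
  define D where "D = inv e ` ((fst \<circ> e) ` dom s \<times> UNIV)"
  have "|(fst \<circ> e) ` dom s| <o |UNIV :: 'i set|"
    using card_of_image \<open>|dom s| <o |UNIV|\<close> by (rule ordLeq_ordLess_trans)
  then have "|(fst \<circ> e) ` dom s \<times> (UNIV :: 'k set)| <o |UNIV :: 'i set|"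
    by (rule card_of_Times_ordLess[OF assms(1) _ assms(2)])
  then have "|D| <o |UNIV :: 'i set|"
    unfolding D_def by (rule ordLeq_ordLess_trans[OF card_of_image])
  moreover have "{g. \<forall>x\<in>D. g x = f x} \<subseteq> block_map e d -` cylinder s"
    if "f \<in> block_map e d -` cylinder s" for f
  proof clarify
    fix g assume "\<forall>x\<in>D. g x = f x"
    then have "block_map e d g i = block_map e d f i" if "i \<in> dom s" for i
      using that by (intro block_map_cong) (auto simp: D_def)
    with that show "g \<in> block_map e d -` cylinder s"
      by (simp add: cylinder_def)
  qed
  ultimately show "openin box_topology (block_map e d -` cylinder s \<inter> topspace box_topology)"
    unfolding topspace_box_topology Int_UNIV_right by (blast intro: openin_box_topologyI)
qed

lemma box_topology_homeomorphic_space: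
  assumes "infinite (UNIV :: 'k set)" and "|UNIV :: 'k set| <o |UNIV :: 'i set|"
    and "|UNIV :: ('k \<Rightarrow> 'a) set| =o |UNIV :: ('k \<Rightarrow> 'b) set|"
  shows "(box_topology :: ('i \<Rightarrow> 'a) topology) homeomorphic_space
         (box_topology :: ('i \<Rightarrow> 'b) topology)"
proof -
  have "|UNIV :: 'k set| \<le>o |UNIV :: 'i set|"
    using assms(2) by (rule ordLess_imp_ordLeq)
  moreover from this have "infinite (UNIV :: 'i set)"
    using assms(1) card_of_ordLeq_finite by blast
  ultimately have "|UNIV :: ('i \<times> 'k) set| =o |UNIV :: 'i set|"
    using card_of_Times_infinite[of "UNIV :: 'i set" "UNIV :: 'k set"] by simp
  then have "|UNIV :: 'i set| =o |UNIV :: ('i \<times> 'k) set|"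
    by (rule ordIso_symmetric)
  then obtain e :: "'i \<Rightarrow> 'i \<times> 'k" where "bij e"
    by (metis card_of_ordIso bij_betw_def bij_def)
  obtain d :: "('k \<Rightarrow> 'a) \<Rightarrow> ('k \<Rightarrow> 'b)" where "bij d"
    using assms(3) by (metis card_of_ordIso bij_betw_def bij_def)
  have "homeomorphic_maps box_topology box_topology (block_map e d) (block_map e (inv d))"
    unfolding homeomorphic_maps_def
  proof (intro conjI ballI continuous_map_block_map assms(1,2))
    show "block_map e (inv d) (block_map e d f) = f" for f
      using \<open>bij e\<close> \<open>bij d\<close> by (simp add: block_map_comp block_map_id bij_is_inj inv_o_cancel)
    show "block_map e d (block_map e (inv d) f) = f" for f
      using \<open>bij e\<close> \<open>bij d\<close>
      by (simp add: block_map_comp block_map_id bij_is_surj surj_iff[THEN iffD1])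
  qed
  then show ?thesis unfolding homeomorphic_space_def by blast
qed

theorem mainTheorem6:
  assumes "regular_cardinal (card_of (UNIV :: 'k set))"
    and "singular_cardinal (card_of (UNIV :: 'i set))"
    and "cof_is (card_of (UNIV :: 'i set)) (card_of (UNIV :: 'k set))"
  shows "(box_topology :: ('i \<Rightarrow> bool) topology) homeomorphic_space
         (box_topology :: ('i \<Rightarrow> 'k) topology)"
proof -
  have "infinite (UNIV :: 'k set)"
    using assms(1) unfolding regular_cardinal_def Field_card_of by blast
  moreover have "|UNIV :: 'k set| <o |UNIV :: 'i set|"
    using assms(2,3) by (rule cof_ordLess_singular)
  moreover have "|UNIV :: ('k \<Rightarrow> bool) set| =o |UNIV :: ('k \<Rightarrow> 'k) set|"
    using \<open>infinite (UNIV :: 'k set)\<close>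
    by (intro card_of_UNIV_fun_bool_ordIso ctwo_ordLeq_Cinfinite Cinfinite_card_of_UNIV
        ordLeq_refl card_of_Card_order)
  ultimately show ?thesis by (rule box_topology_homeomorphic_space)
qed

end
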